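(* Let $g_*$ be the standard metric on $\mathbb{S}^2$, let $f>0$ be a smooth function on $[a,b]$, and consider the metric $\gamma=ds^2+f(s)^2g_*$ on $[a,b]\times\mathbb{S}^2$. Suppose (1) $\gamma$ has positive scalar curvature; (2) $\Sigma_b:=\{b\}\times\mathbb{S}^2$ has positive mean curvature; and (3) $\mathfrak{m}_{_H}(\Sigma_b)\ge 0$. Then for any $m_e>\mathfrak{m}_{_H}(\Sigma_b)$ there exists a smooth, rotationally symmetric, asymptotically flat Riemannian $3$-manifold $M$ with boundary $\partial M$ and non-negative scalar curvature such that (i) outside a compact set, $M$ is isometric to a spatial Schwarzschild manifold of mass $m_e$; (ii) $\partial M$ has a neighborhood $U$ isometric to $\left([a,\frac{a+b}{2})\times\mathbb{S}^2,\gamma\right)$; and (iii) if $f'>0$ on $[a,b]$, then $M$ can be constructed such that every rotationally symmetric sphere in $M$ has positive constant mean curvature.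
   Context: The mean curvature of $\Sigma_b$ is computed with respect to the unit normal $\partial_s$ (so it equals $2f'(b)/f(b)$). The Hawking mass of a closed surface $S$ with induced metric and mean curvature $H$ is $\mathfrak{m}_{_H}(S)=\sqrt{\frac{|S|}{16\pi}}\left(1-\frac{1}{16\pi}\int_S H^2\,d\sigma\right)$; for $\Sigma_b$ it equals $\frac{f(b)}{2}(1-f'(b)^2)$. The spatial Schwarzschild manifold of mass $m>0$ is $\left((2m,\infty)\times\mathbb{S}^2,\ \frac{1}{1-2m/r}dr^2+r^2g_*\right)$. *)

theory Defs
  imports "HOL-Analysis.Analysis"
begin

text \<open>Smoothness of a real function on a set S: f is infinitely differentiable
  on some open set containing S (for closed intervals this is equivalent to
  smoothness up to the boundary, by Seeley/Whitney extension).  On the open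
  set U every iterated deriv is a genuine derivative.\<close>
definition smooth_on :: "real set \<Rightarrow> (real \<Rightarrow> real) \<Rightarrow> bool" where
  "smooth_on S f \<longleftrightarrow> (\<exists>U. open U \<and> S \<subseteq> U \<and>
      (\<forall>k::nat. \<forall>x\<in>U. ((deriv ^^ k) f) differentiable (at x)))"

text \<open>Rotationally symmetric (warped product) metric ds^2 + F(s)^2 g_* on
  I x S^2, with g_* the round unit metric on S^2.\<close>

definition warped_scal :: "(real \<Rightarrow> real) \<Rightarrow> real \<Rightarrow> real" where
  "warped_scal F s =
     (2 * (1 - (deriv F s)\<^sup>2) - 4 * F s * deriv (deriv F) s) / (F s)\<^sup>2"

text \<open>Mean curvature of the sphere {s} x S^2 with respect to the unit normal d/ds.\<close>
definition warped_mean_curv :: "(real \<Rightarrow> real) \<Rightarrow> real \<Rightarrow> real" where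
  "warped_mean_curv F s = 2 * deriv F s / F s"

definition warped_hawking_mass :: "(real \<Rightarrow> real) \<Rightarrow> real \<Rightarrow> real" where
  "warped_hawking_mass F s = F s / 2 * (1 - (deriv F s)\<^sup>2)"

text \<open>The warped product ([s1,\<infinity>) x S^2, ds^2 + F^2 g_*) is isometric (via r = F(s))
  to the exterior region {r \<ge> F s1} of the spatial Schwarzschild manifold of mass m:
  F > 2m and dF/ds = sqrt(1 - 2m/F) there.\<close>
definition schwarzschild_end :: "real \<Rightarrow> (real \<Rightarrow> real) \<Rightarrow> real \<Rightarrow> bool" where
  "schwarzschild_end m F s1 \<longleftrightarrow>
     (\<forall>s\<ge>s1. F s > 2 * m \<and> deriv F s = sqrt (1 - 2 * m / F s))"

end

theory Submission
  imports Defs "HOL-Computational_Algebra.Polynomial"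
begin

text \<open>Where f' > 0 the area radius r = f s is a coordinate, in which
  \<gamma> = dr^2 / (1 - 2 m(r) / r) + r^2 g_* with m(r) the Hawking mass of the sphere of area
  radius r. In these terms the scalar curvature is 4 m'(r) / r^2 and the mean curvature is
  2 sqrt (1 - 2 m(r) / r) / r. Near \<Sigma>_b positive scalar curvature makes m increasing, and
  2 m(r) < r. Keeping m up to a radius r1 < f b and then blending it smoothly and monotonically
  into the constant m_e preserves 2 m(r) < r. Integrating ds/dr = (1 - 2 m(r) / r)^(-1/2) and
  inverting gives a warped product with nonnegative scalar curvature and positive mean curvature;
  by uniqueness for this ODE it agrees with f below the radius r1, and it is Schwarzschild of
  mass m_e once m = m_e.\<close>

section \<open>Higher differentiability on open sets\<close>

fun differentiable_upto :: "nat \<Rightarrow> real set \<Rightarrow> (real \<Rightarrow> real) \<Rightarrow> bool" where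
  "differentiable_upto 0 U f \<longleftrightarrow> True"
| "differentiable_upto (Suc k) U f \<longleftrightarrow>
     (\<forall>x\<in>U. f differentiable (at x)) \<and> differentiable_upto k U (deriv f)"

lemma differentiable_upto_Suc_iff:
  "differentiable_upto (Suc k) U f \<longleftrightarrow> (\<forall>j\<le>k. \<forall>x\<in>U. (deriv ^^ j) f differentiable (at x))"
proof (induction k arbitrary: f)
  case (Suc k)
  have "differentiable_upto (Suc (Suc k)) U f \<longleftrightarrow>
      (\<forall>x\<in>U. f differentiable (at x)) \<and> (\<forall>j\<le>k. \<forall>x\<in>U. (deriv ^^ Suc j) f differentiable (at x))"
    using Suc[of "deriv f"] by (simp add: funpow_Suc_right del: funpow.simps)
  also have "\<dots> \<longleftrightarrow> (\<forall>j\<le>Suc k. \<forall>x\<in>U. (deriv ^^ j) f differentiable (at x))"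
    by (metis Suc_le_mono funpow_0 le0 not0_implies_Suc)
  finally show ?case .
qed simp

lemma differentiable_upto_all_iff:
  "(\<forall>k. differentiable_upto k U f) \<longleftrightarrow> (\<forall>k. \<forall>x\<in>U. (deriv ^^ k) f differentiable (at x))"
  by (metis differentiable_upto.simps(1) differentiable_upto_Suc_iff le_refl not0_implies_Suc)

lemma differentiable_upto_cong:
  assumes "open U" "\<And>x. x \<in> U \<Longrightarrow> f x = g x" "differentiable_upto k U f"
  shows "differentiable_upto k U g"
  using assms(2,3)
proof (induction k arbitrary: f g)
  case (Suc k)
  have ev: "eventually (\<lambda>y. f y = g y) (nhds x)" if "x \<in> U" for x
    using eventually_nhds_in_open[OF assms(1) that] by (rule eventually_mono)
      (use Suc.prems in auto)
  have "deriv f x = deriv g x" if "x \<in> U" for x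
    using deriv_cong_ev[OF ev[OF that] refl] .
  moreover have "g differentiable (at x)" if "x \<in> U" for x
  proof -
    have "f differentiable (at x)" using Suc.prems(2) that by simp
    then obtain D where "(f has_real_derivative D) (at x)"
      by (auto simp: real_differentiable_def)
    then have "(g has_real_derivative D) (at x)"
      by (rule has_field_derivative_transform_within_open[OF _ assms(1) that Suc.prems(1)])
    then show ?thesis by (auto simp: real_differentiable_def)
  qed
  ultimately show ?case
    using Suc.prems Suc.IH[of "deriv f" "deriv g"] by auto
qed simp

lemma differentiable_upto_SucD: "differentiable_upto (Suc k) U f \<Longrightarrow> differentiable_upto k U f"
  by (induction k arbitrary: f) auto

lemma differentiable_upto_subset:
  "differentiable_upto k U f \<Longrightarrow> V \<subseteq> U \<Longrightarrow> differentiable_upto k V f"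
  by (induction k arbitrary: f) auto

lemma differentiable_upto_Un:
  "differentiable_upto k U f \<Longrightarrow> differentiable_upto k V f \<Longrightarrow> differentiable_upto k (U \<union> V) f"
  by (induction k arbitrary: f) auto

lemma differentiable_upto_derivI:
  assumes "open U" "\<And>x. x \<in> U \<Longrightarrow> (f has_real_derivative f' x) (at x)" "differentiable_upto k U f'"
  shows "differentiable_upto (Suc k) U f"
proof -
  have "differentiable_upto k U (deriv f)"
    by (rule differentiable_upto_cong[OF assms(1) _ assms(3)])
      (use assms(2) DERIV_imp_deriv in metis)
  moreover have "\<forall>x\<in>U. f differentiable (at x)"
    using assms(2) real_differentiable_def by blast
  ultimately show ?thesis by simp
qed

lemma differentiable_upto_const: "differentiable_upto k U (\<lambda>x. c)"
proof (induction k arbitrary: c)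
  case (Suc k)
  have "deriv (\<lambda>x. c) = (\<lambda>x. 0)" by (intro ext DERIV_imp_deriv) simp
  then show ?case using Suc by simp
qed simp

lemma differentiable_upto_ident: "differentiable_upto k U (\<lambda>x. x)"
proof (cases k)
  case (Suc j)
  have "deriv (\<lambda>x. x) = (\<lambda>x. 1)" by (intro ext DERIV_imp_deriv) simp
  then show ?thesis using Suc differentiable_upto_const by simp
qed simp

lemma differentiable_upto_add:
  assumes "open U" "differentiable_upto k U f" "differentiable_upto k U g"
  shows "differentiable_upto k U (\<lambda>x. f x + g x)"
  using assms(2,3)
proof (induction k arbitrary: f g)
  case (Suc k)
  have "((\<lambda>x. f x + g x) has_real_derivative deriv f x + deriv g x) (at x)" if "x \<in> U" for x
    using Suc.prems that by (auto intro!: DERIV_add simp: DERIV_deriv_iff_real_differentiable)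
  then show ?case
    by (rule differentiable_upto_derivI[OF assms(1) _ Suc.IH]) (use Suc.prems in simp_all)
qed simp

lemma differentiable_upto_mult:
  assumes "open U" "differentiable_upto k U f" "differentiable_upto k U g"
  shows "differentiable_upto k U (\<lambda>x. f x * g x)"
  using assms(2,3)
proof (induction k arbitrary: f g)
  case (Suc k)
  have "((\<lambda>x. f x * g x) has_real_derivative deriv f x * g x + f x * deriv g x) (at x)"
    if "x \<in> U" for x
  proof -
    have "(f has_real_derivative deriv f x) (at x)" "(g has_real_derivative deriv g x) (at x)"
      using Suc.prems that by (auto simp: DERIV_deriv_iff_real_differentiable)
    from DERIV_mult'[OF this] show ?thesis by (simp add: algebra_simps)
  qed
  moreover have "differentiable_upto k U (\<lambda>x. deriv f x * g x + f x * deriv g x)"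
    using Suc.prems differentiable_upto_SucD[OF Suc.prems(1)]
      differentiable_upto_SucD[OF Suc.prems(2)]
    by (intro differentiable_upto_add[OF assms(1)] Suc.IH) auto
  ultimately show ?case by (rule differentiable_upto_derivI[OF assms(1)])
qed simp

lemma differentiable_upto_compose:
  assumes "open U" "open V" "\<And>x. x \<in> U \<Longrightarrow> f x \<in> V"
    and "differentiable_upto k V g" "differentiable_upto k U f"
  shows "differentiable_upto k U (\<lambda>x. g (f x))"
  using assms(4,5)
proof (induction k arbitrary: g)
  case (Suc k)
  have D: "((\<lambda>x. g (f x)) has_real_derivative deriv g (f x) * deriv f x) (at x)" if "x \<in> U" for x
  proof (rule DERIV_chain2[of g])
    show "(g has_real_derivative deriv g (f x)) (at (f x))"
      using Suc.prems(1) assms(3)[OF that] by (simp add: DERIV_deriv_iff_real_differentiable)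
    show "(f has_real_derivative deriv f x) (at x)"
      using Suc.prems(2) that by (simp add: DERIV_deriv_iff_real_differentiable)
  qed
  have "differentiable_upto k U (\<lambda>x. deriv g (f x))"
    using Suc.IH[of "deriv g"] Suc.prems differentiable_upto_SucD[OF Suc.prems(2)] by simp
  then have "differentiable_upto k U (\<lambda>x. deriv g (f x) * deriv f x)"
    using Suc.prems(2) by (intro differentiable_upto_mult[OF assms(1)]) simp_all
  with D show ?case by (rule differentiable_upto_derivI[OF assms(1)])
qed simp

lemma differentiable_upto_cmult:
  "open U \<Longrightarrow> differentiable_upto k U f \<Longrightarrow> differentiable_upto k U (\<lambda>x. c * f x)"
  using differentiable_upto_mult[OF _ differentiable_upto_const] by blast

lemma differentiable_upto_diff:
  assumes "open U" "differentiable_upto k U f" "differentiable_upto k U g"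
  shows "differentiable_upto k U (\<lambda>x. f x - g x)"
  using differentiable_upto_add[OF assms(1,2) differentiable_upto_cmult[OF assms(1,3), of "-1"]]
  by simp

lemma differentiable_upto_inverse: "differentiable_upto k (-{0}) inverse"
proof (induction k)
  case (Suc k)
  have open_U: "open (-{0::real})" by (simp add: open_Compl)
  have d: "differentiable_upto k (-{0}) (\<lambda>x. -1 * (inverse x * inverse x))"
    by (intro differentiable_upto_cmult differentiable_upto_mult Suc open_U)
  show ?case
    by (rule differentiable_upto_derivI[OF open_U _ d])
      (auto intro!: derivative_eq_intros simp: power2_eq_square)
qed simp

lemma differentiable_upto_inverse_compose:
  assumes "open U" "differentiable_upto k U f" "\<And>x. x \<in> U \<Longrightarrow> f x \<noteq> 0"
  shows "differentiable_upto k U (\<lambda>x. inverse (f x))"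
  by (rule differentiable_upto_compose[OF assms(1) _ _ differentiable_upto_inverse assms(2)])
    (use assms(3) in \<open>auto simp: open_Compl\<close>)

lemma differentiable_upto_sqrt: "differentiable_upto k {0<..} sqrt"
proof (induction k)
  case (Suc k)
  have d: "differentiable_upto k {0<..} (\<lambda>x. 1/2 * inverse (sqrt x))"
    by (intro differentiable_upto_cmult differentiable_upto_inverse_compose Suc) auto
  show ?case
    by (rule differentiable_upto_derivI[OF _ _ d])
      (auto intro!: derivative_eq_intros)
qed simp

lemma differentiable_upto_sqrt_compose:
  assumes "open U" "differentiable_upto k U f" "\<And>x. x \<in> U \<Longrightarrow> f x > 0"
  shows "differentiable_upto k U (\<lambda>x. sqrt (f x))"
  by (rule differentiable_upto_compose[OF assms(1) _ _ differentiable_upto_sqrt assms(2)])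
    (use assms(3) in auto)

lemma smooth_on_glue:
  assumes "open U" "{a..q} \<subseteq> U" "q < q1"
    and "\<And>k. differentiable_upto k U f" "\<And>k. differentiable_upto k {q<..} g"
    and "\<And>s. q < s \<Longrightarrow> s \<le> q1 \<Longrightarrow> f s = g s"
  shows "smooth_on {a..} (\<lambda>s. if s \<le> q1 then f s else g s)"
  unfolding smooth_on_def
proof (intro exI conjI)
  let ?F = "\<lambda>s. if s \<le> q1 then f s else g s"
  show "open (U \<inter> {..<q1} \<union> {q<..})"
    using assms(1) by (intro open_Un open_Int) auto
  show "{a..} \<subseteq> U \<inter> {..<q1} \<union> {q<..}"
  proof
    fix s assume "s \<in> {a..}"
    then show "s \<in> U \<inter> {..<q1} \<union> {q<..}"
      using assms(2,3) by (cases "s \<le> q") auto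
  qed
  have "differentiable_upto k (U \<inter> {..<q1}) f" for k
    using assms(4) by (rule differentiable_upto_subset) simp
  then have "differentiable_upto k (U \<inter> {..<q1}) ?F" for k
    by (rule differentiable_upto_cong[OF open_Int[OF assms(1) open_lessThan], rotated]) simp
  moreover have "differentiable_upto k {q<..} ?F" for k
    using assms(5)
    by (rule differentiable_upto_cong[OF open_greaterThan, rotated]) (simp add: assms(6))
  ultimately have "\<forall>k. differentiable_upto k (U \<inter> {..<q1} \<union> {q<..}) ?F"
    using differentiable_upto_Un by blast
  then show "\<forall>k. \<forall>x\<in>U \<inter> {..<q1} \<union> {q<..}. (deriv ^^ k) ?F differentiable (at x)"
    by (rule differentiable_upto_all_iff[THEN iffD1])
qed

section \<open>A smooth monotone step function\<close>

definition flat_exp :: "real poly \<Rightarrow> real \<Rightarrow> real" where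
  "flat_exp p x = (if 0 < x then poly p (inverse x) * exp (- inverse x) else 0)"

text \<open>The derivative of p(1/x) e^(-1/x) is q(1/x) e^(-1/x) with q = X^2 (p - p').\<close>

definition flat_exp_deriv_poly :: "real poly \<Rightarrow> real poly" where
  "flat_exp_deriv_poly p = monom 1 2 * (p - pderiv p)"

lemma poly_times_exp_minus_tendsto_0: "((\<lambda>t. poly (p :: real poly) t * exp (- t)) \<longlongrightarrow> 0) at_top"
proof -
  have "((\<lambda>t. \<Sum>i\<le>degree p. coeff p i * (t ^ i / exp t)) \<longlongrightarrow> 0) at_top"
    by (intro tendsto_null_sum tendsto_mult_right_zero tendsto_power_div_exp_0)
  then show ?thesis
    by (simp add: poly_altdef sum_distrib_right exp_minus divide_inverse mult.assoc)
qed

lemma has_real_derivative_flat_exp: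
  "(flat_exp p has_real_derivative flat_exp (flat_exp_deriv_poly p) x) (at x)"
proof (cases x "0 :: real" rule: linorder_cases)
  case less
  have "((\<lambda>x. 0) has_real_derivative flat_exp (flat_exp_deriv_poly p) x) (at x)"
    using less by (simp add: flat_exp_def)
  then show ?thesis
    by (rule has_field_derivative_transform_within_open[where S="{..<0}"])
      (use less in \<open>auto simp: flat_exp_def\<close>)
next
  case equal
  have "((\<lambda>t. poly (pCons 0 p) t * exp (- t)) \<longlongrightarrow> 0) at_top"
    by (rule poly_times_exp_minus_tendsto_0)
  from filterlim_compose[OF this filterlim_inverse_at_top_right]
  have "((\<lambda>y. poly (pCons 0 p) (inverse y) * exp (- inverse y)) \<longlongrightarrow> 0) (at_right 0)" .
  then have "((\<lambda>y. flat_exp p y / y) \<longlongrightarrow> 0) (at_right 0)"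
    by (rule Lim_transform_eventually)
      (auto simp: eventually_at_right_field flat_exp_def divide_inverse intro!: exI[of _ 1])
  moreover have "((\<lambda>y. flat_exp p y / y) \<longlongrightarrow> 0) (at_left 0)"
    by (rule Lim_transform_eventually[of "\<lambda>_. 0"])
      (auto simp: eventually_at_left_field flat_exp_def intro!: exI[of _ "-1"])
  ultimately have "((\<lambda>y. (flat_exp p y - flat_exp p 0) / (y - 0)) \<longlongrightarrow> 0) (at 0)"
    by (simp add: filterlim_at_split flat_exp_def)
  then show ?thesis
    using equal by (simp add: has_field_derivative_iff flat_exp_def)
next
  case greater
  have "((\<lambda>x. poly p (inverse x) * exp (- inverse x)) has_real_derivative
      poly (pderiv p) (inverse x) * (- (inverse x * inverse x)) * exp (- inverse x)
      + poly p (inverse x) * (exp (- inverse x) * (inverse x * inverse x))) (at x)"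
    using greater
    by (auto intro!: derivative_eq_intros DERIV_chain2[OF poly_DERIV] simp: power2_eq_square)
  then have "((\<lambda>x. poly p (inverse x) * exp (- inverse x)) has_real_derivative
      flat_exp (flat_exp_deriv_poly p) x) (at x)"
    using greater
    by (simp add: flat_exp_def flat_exp_deriv_poly_def poly_monom algebra_simps power2_eq_square)
  then show ?thesis
    by (rule has_field_derivative_transform_within_open[where S="{0<..}"])
      (use greater in \<open>auto simp: flat_exp_def\<close>)
qed

lemma differentiable_upto_flat_exp: "differentiable_upto k U (flat_exp p)"
proof (induction k arbitrary: p U)
  case (Suc k)
  have "differentiable_upto (Suc k) UNIV (flat_exp p)"
    by (rule differentiable_upto_derivI[OF _ has_real_derivative_flat_exp Suc]) simp
  then show ?case by (rule differentiable_upto_subset) simp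
qed simp

definition smooth_step :: "real \<Rightarrow> real" where
  "smooth_step x = flat_exp 1 x / (flat_exp 1 x + flat_exp 1 (1 - x))"

lemma flat_exp_1_nonneg: "flat_exp 1 x \<ge> 0"
  by (simp add: flat_exp_def)

lemma flat_exp_1_mono: "mono (flat_exp 1)"
proof
  fix x y :: real assume "x \<le> y"
  then show "flat_exp 1 x \<le> flat_exp 1 y"
    by (auto simp: flat_exp_def le_imp_inverse_le)
qed

lemma smooth_step_denominator_pos: "flat_exp 1 x + flat_exp 1 (1 - x) > 0"
  by (cases "x > 0") (auto simp: flat_exp_def add_pos_nonneg add_nonneg_pos)

lemma smooth_step_eq_0: "x \<le> 0 \<Longrightarrow> smooth_step x = 0"
  by (simp add: smooth_step_def flat_exp_def)

lemma smooth_step_eq_1: "x \<ge> 1 \<Longrightarrow> smooth_step x = 1"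
  using smooth_step_denominator_pos[of x] by (simp add: smooth_step_def flat_exp_def)

lemma smooth_step_bounds: "0 \<le> smooth_step x" "smooth_step x \<le> 1"
  using smooth_step_denominator_pos[of x] flat_exp_1_nonneg[of x] flat_exp_1_nonneg[of "1 - x"]
  by (simp_all add: smooth_step_def)

lemma mono_smooth_step: "mono smooth_step"
proof
  fix x y :: real assume "x \<le> y"
  let ?u = "flat_exp 1 x" and ?u' = "flat_exp 1 y"
    and ?v = "flat_exp 1 (1 - x)" and ?v' = "flat_exp 1 (1 - y)"
  have "?u * ?v' \<le> ?u' * ?v"
    using \<open>x \<le> y\<close> monoD[OF flat_exp_1_mono] flat_exp_1_nonneg by (intro mult_mono) auto
  then show "smooth_step x \<le> smooth_step y"
    using smooth_step_denominator_pos[of x] smooth_step_denominator_pos[of y]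
    by (simp add: smooth_step_def divide_simps algebra_simps)
qed

lemma differentiable_upto_smooth_step: "differentiable_upto k U smooth_step"
proof -
  have "differentiable_upto k UNIV (\<lambda>x. flat_exp 1 (1 - x))"
    by (rule differentiable_upto_compose[OF _ open_UNIV _ differentiable_upto_flat_exp
          differentiable_upto_diff[OF _ differentiable_upto_const differentiable_upto_ident]])
      simp_all
  then have "differentiable_upto k UNIV (\<lambda>x. inverse (flat_exp 1 x + flat_exp 1 (1 - x)))"
    using smooth_step_denominator_pos[THEN less_imp_neq, THEN not_sym]
    by (intro differentiable_upto_inverse_compose differentiable_upto_add
        differentiable_upto_flat_exp)
      auto
  then have "differentiable_upto k UNIV
      (\<lambda>x. flat_exp 1 x * inverse (flat_exp 1 x + flat_exp 1 (1 - x)))"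
    by (rule differentiable_upto_mult[OF open_UNIV differentiable_upto_flat_exp])
  then have "differentiable_upto k UNIV smooth_step"
    by (rule differentiable_upto_cong[OF open_UNIV, rotated])
      (simp add: smooth_step_def divide_inverse)
  then show ?thesis by (rule differentiable_upto_subset) simp
qed

section \<open>Monotonicity and inverse functions\<close>

lemma has_real_derivative_nonneg_if_mono_on:
  assumes "mono_on A f" "open A" "x \<in> A" "(f has_real_derivative D) (at x)"
  shows "D \<ge> 0"
proof -
  have "((\<lambda>y. (f y - f x) / (y - x)) \<longlongrightarrow> D) (at_right x)"
    using assms(4) by (simp add: has_field_derivative_iff filterlim_at_split)
  moreover have "eventually (\<lambda>y. y \<in> A \<and> y > x) (at_right x)"
    using eventually_at_topological[THEN iffD2, OF exI[of _ A]] assms(2,3)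
    by (auto simp: eventually_at_right_less eventually_conj_iff)
  then have "eventually (\<lambda>y. (f y - f x) / (y - x) \<ge> 0) (at_right x)"
    by (rule eventually_mono) (use assms(1,3) in \<open>auto dest: mono_onD\<close>)
  ultimately show ?thesis
    by (rule tendsto_lowerbound) simp
qed

lemma strict_mono_on_if_DERIV_pos:
  fixes f :: "real \<Rightarrow> real"
  assumes "connected A" "continuous_on A f"
    and "\<And>x. x \<in> interior A \<Longrightarrow> \<exists>D. (f has_real_derivative D) (at x) \<and> D > 0"
  shows "strict_mono_on A f"
proof (rule strict_mono_onI)
  fix r s assume rs: "r \<in> A" "s \<in> A" "r < s"
  then have sub: "{r..s} \<subseteq> A"
    using connected_contains_Icc assms(1) by blast
  then have "{r<..<s} \<subseteq> interior A"
    by (intro interior_maximal) auto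
  then show "f r < f s"
    using DERIV_pos_imp_increasing_open[OF rs(3) _ continuous_on_subset[OF assms(2) sub]] assms(3)
    by (meson greaterThanLessThan_iff subsetD)
qed

lemma isCont_inv_into:
  fixes f :: "real \<Rightarrow> real"
  assumes "open I" "x \<in> I" "inj_on f I" "continuous_on I f"
  shows "isCont (inv_into I f) (f x)"
proof -
  obtain e where "e > 0" "cball x e \<subseteq> I"
    using assms(1,2) open_contains_cball by blast
  then have sub: "z \<in> I" if "x - e \<le> z" "z \<le> x + e" for z
    using that by (auto simp: cball_def dist_real_def)
  show ?thesis
  proof (rule isCont_inverse_function2[of "x - e" x "x + e"])
    fix z assume "x - e \<le> z" "z \<le> x + e"
    then have "z \<in> I" by (rule sub)
    then show "inv_into I f (f z) = z" "isCont f z"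
      using assms(1,3,4) by (simp_all add: continuous_on_eq_continuous_at)
  qed (use \<open>e > 0\<close> in auto)
qed

lemma has_real_derivative_inv_into:
  fixes f :: "real \<Rightarrow> real"
  assumes "open I" "inj_on f I" "continuous_on I f" "open V" "V \<subseteq> f ` I" "y \<in> V"
    and "(f has_real_derivative D) (at (inv_into I f y))" "D \<noteq> 0"
  shows "(inv_into I f has_real_derivative inverse D) (at y)"
proof -
  have y: "y \<in> f ` I" using assms(5,6) by blast
  have "isCont (inv_into I f) (f (inv_into I f y))"
    using isCont_inv_into[OF assms(1) inv_into_into[OF y] assms(2,3)] .
  then have "isCont (inv_into I f) y"
    by (simp only: f_inv_into_f[OF y])
  moreover have "f (inv_into I f z) = z" if "z \<in> V" for z
    using that assms(5) by (intro f_inv_into_f) blast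
  ultimately show ?thesis
    by (intro has_field_derivative_inverse_basic[of f D "inv_into I f" y V] assms(4,6-8))
qed

lemma differentiable_upto_inv_into:
  fixes f :: "real \<Rightarrow> real"
  assumes "open I" "inj_on f I" "open V" "V \<subseteq> f ` I"
    and "\<And>x. x \<in> I \<Longrightarrow> deriv f x \<noteq> 0" "\<And>k. differentiable_upto k I f"
  shows "differentiable_upto k V (inv_into I f)"
proof (induction k)
  case (Suc k)
  have f_deriv: "(f has_real_derivative deriv f x) (at x)" if "x \<in> I" for x
    using assms(6)[of 1] that by (simp add: DERIV_deriv_iff_real_differentiable)
  have into: "inv_into I f y \<in> I" if "y \<in> V" for y
    using assms(4) that by (auto intro: inv_into_into)
  have "continuous_on I f"
    using f_deriv by (meson DERIV_isCont continuous_at_imp_continuous_on)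
  then have D: "(inv_into I f has_real_derivative inverse (deriv f (inv_into I f y))) (at y)"
    if "y \<in> V" for y
    using has_real_derivative_inv_into[OF assms(1,2) _ assms(3,4) that f_deriv[OF into[OF that]]]
      assms(5)[OF into[OF that]] by blast
  have "differentiable_upto k I (deriv f)"
    using assms(6)[of "Suc k"] by simp
  then have "differentiable_upto k V (\<lambda>y. deriv f (inv_into I f y))"
    using into by (intro differentiable_upto_compose[OF assms(3,1) _ _ Suc])
  then have "differentiable_upto k V (\<lambda>y. inverse (deriv f (inv_into I f y)))"
    using into assms(5) by (intro differentiable_upto_inverse_compose[OF assms(3)]) blast+
  with D show ?case by (rule differentiable_upto_derivI[OF assms(3)])
qed simp

lemma exists_left_interval_pos:
  fixes g :: "real \<Rightarrow> real"
  assumes "isCont g b" "0 < g b" "a < b"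
  obtains p where "a < p" "p < b" "\<And>s. s \<in> {p..b} \<Longrightarrow> 0 < g s"
proof -
  have "eventually (\<lambda>s. 0 < g s) (at b)"
    using assms(1,2) by (simp add: isCont_def order_tendstoD(1))
  then obtain d where d: "0 < d" "\<And>s. s \<noteq> b \<Longrightarrow> dist s b < d \<Longrightarrow> 0 < g s"
    by (auto simp: eventually_at)
  define p where "p = max ((a + b) / 2) (b - d / 2)"
  have "a < (a + b) / 2" "(a + b) / 2 < b" "b - d / 2 < b"
    using assms(3) d(1) by simp_all
  then have "a < p" "p < b"
    unfolding p_def by linarith+
  moreover have "0 < g s" if "s \<in> {p..b}" for s
    using that assms(2) d by (cases "s = b") (auto simp: p_def dist_real_def)
  ultimately show thesis
    using that by blast
qed

section \<open>Warped products\<close>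

lemma has_real_derivative_warped_hawking_mass:
  assumes "f differentiable (at s)" "deriv f differentiable (at s)" "f s \<noteq> 0"
  shows "(warped_hawking_mass f has_real_derivative
           deriv f s * (f s)\<^sup>2 * warped_scal f s / 4) (at s)"
proof -
  have df: "(f has_real_derivative deriv f s) (at s)"
    and ddf: "(deriv f has_real_derivative deriv (deriv f) s) (at s)"
    using assms(1,2) by (simp_all add: DERIV_deriv_iff_real_differentiable)
  have D: "((\<lambda>s. f s / 2 * (1 - (deriv f s)\<^sup>2)) has_real_derivative
      deriv f s / 2 * (1 - (deriv f s)\<^sup>2) + f s / 2 * (- (2 * deriv f s * deriv (deriv f) s)))
      (at s)"
    by (rule derivative_eq_intros df ddf refl | simp)+
  have E: "deriv f s / 2 * (1 - (deriv f s)\<^sup>2) + f s / 2 * (- (2 * deriv f s * deriv (deriv f) s))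
      = deriv f s * (f s)\<^sup>2 * warped_scal f s / 4"
    using assms(3) by (simp add: warped_scal_def field_simps power2_eq_square)
  show ?thesis
    unfolding warped_hawking_mass_def[abs_def] E[symmetric] by (rule D)
qed

lemma warped_quantities_eq_on_open:
  assumes "open V" "s \<in> V" "\<And>x. x \<in> V \<Longrightarrow> F x = g x"
  shows "deriv F s = deriv g s" "warped_scal F s = warped_scal g s"
    "warped_mean_curv F s = warped_mean_curv g s"
proof -
  have ev: "eventually (\<lambda>x. F x = g x) (nhds s)"
    using eventually_nhds_in_open[OF assms(1,2)] by (rule eventually_mono) (use assms(3) in auto)
  show "deriv F s = deriv g s"
    by (rule deriv_cong_ev[OF ev refl])
  moreover have "deriv (deriv F) s = deriv (deriv g) s"
    using higher_deriv_cong_ev[OF ev refl, of 2] by (simp add: numeral_2_eq_2)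
  ultimately show "warped_scal F s = warped_scal g s" "warped_mean_curv F s = warped_mean_curv g s"
    using assms by (simp_all add: warped_scal_def warped_mean_curv_def)
qed

lemma warped_quantities_glued:
  fixes f g :: "real \<Rightarrow> real"
  assumes "open U" "{a..q} \<subseteq> U" "q < q1" "\<And>s. q < s \<Longrightarrow> s \<le> q1 \<Longrightarrow> f s = g s"
  defines "F \<equiv> \<lambda>s. if s \<le> q1 then f s else g s"
  shows "\<And>s. a \<le> s \<Longrightarrow> s \<le> q \<Longrightarrow> F s = f s \<and> warped_scal F s = warped_scal f s
           \<and> warped_mean_curv F s = warped_mean_curv f s"
    and "\<And>s. q < s \<Longrightarrow> F s = g s \<and> deriv F s = deriv g s \<and> warped_scal F s = warped_scal g s
           \<and> warped_mean_curv F s = warped_mean_curv g s"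
proof -
  fix s assume "a \<le> s" "s \<le> q"
  then have s: "s \<in> U \<inter> {..<q1}"
    using assms(2,3) by auto
  have "F x = f x" if "x \<in> U \<inter> {..<q1}" for x
    using that by (simp add: F_def)
  note local = warped_quantities_eq_on_open[OF open_Int[OF assms(1) open_lessThan] s this]
  show "F s = f s \<and> warped_scal F s = warped_scal f s
      \<and> warped_mean_curv F s = warped_mean_curv f s"
    using s local(2,3) by (simp add: F_def)
next
  fix s assume s: "q < s"
  have "F x = g x" if "x \<in> {q<..}" for x
    using that assms(4) by (simp add: F_def)
  note local = warped_quantities_eq_on_open[OF open_greaterThan _ this]
  show "F s = g s \<and> deriv F s = deriv g s \<and> warped_scal F s = warped_scal g s
      \<and> warped_mean_curv F s = warped_mean_curv g s"
    using s local[of s] assms(4)[of s] by (auto simp: F_def)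
qed

section \<open>Mass profiles\<close>

definition ramp :: "real \<Rightarrow> real \<Rightarrow> real \<Rightarrow> real" where
  "ramp x0 x1 x = smooth_step ((x - x0) / (x1 - x0))"

lemma ramp_eq_0: "x0 < x1 \<Longrightarrow> x \<le> x0 \<Longrightarrow> ramp x0 x1 x = 0"
  by (simp add: ramp_def smooth_step_eq_0 divide_nonpos_pos)

lemma ramp_eq_1: "x0 < x1 \<Longrightarrow> x1 \<le> x \<Longrightarrow> ramp x0 x1 x = 1"
  by (simp add: ramp_def smooth_step_eq_1)

lemma ramp_bounds: "0 \<le> ramp x0 x1 x" "ramp x0 x1 x \<le> 1"
  by (simp_all add: ramp_def smooth_step_bounds)

lemma mono_ramp: "x0 < x1 \<Longrightarrow> mono (ramp x0 x1)"
  unfolding ramp_def by (intro monoI monoD[OF mono_smooth_step] divide_right_mono) auto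

lemma differentiable_upto_ramp: "differentiable_upto k U (ramp x0 x1)"
proof -
  have "differentiable_upto k UNIV (\<lambda>x. smooth_step ((x - x0) * inverse (x1 - x0)))"
    by (intro differentiable_upto_compose[OF open_UNIV open_UNIV _ differentiable_upto_smooth_step]
        differentiable_upto_mult differentiable_upto_diff differentiable_upto_ident
        differentiable_upto_const) simp_all
  then have "differentiable_upto k UNIV (ramp x0 x1)"
    by (rule differentiable_upto_cong[OF open_UNIV, rotated]) (simp add: ramp_def divide_inverse)
  then show ?thesis by (rule differentiable_upto_subset) simp
qed

lemma mono_on_blend:
  fixes f g \<phi> :: "real \<Rightarrow> real"
  assumes "mono_on A f" "mono_on A g" "mono_on A \<phi>"
    and "\<And>x. x \<in> A \<Longrightarrow> 0 \<le> \<phi> x \<and> \<phi> x \<le> 1 \<and> f x \<le> g x"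
  shows "mono_on A (\<lambda>x. (1 - \<phi> x) * f x + \<phi> x * g x)"
proof (rule mono_onI)
  fix x y assume xy: "x \<in> A" "y \<in> A" "x \<le> y"
  have "0 \<le> (1 - \<phi> y) * (f y - f x)" "0 \<le> \<phi> y * (g y - g x)" "0 \<le> (\<phi> y - \<phi> x) * (g x - f x)"
    using assms xy by (auto intro!: mult_nonneg_nonneg dest: mono_onD)
  moreover have "(1 - \<phi> y) * f y + \<phi> y * g y - ((1 - \<phi> x) * f x + \<phi> x * g x)
      = (1 - \<phi> y) * (f y - f x) + \<phi> y * (g y - g x) + (\<phi> y - \<phi> x) * (g x - f x)"
    by (simp add: algebra_simps)
  ultimately show "(1 - \<phi> x) * f x + \<phi> x * g x \<le> (1 - \<phi> y) * f y + \<phi> y * g y"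
    by linarith
qed

locale mass_gluing =
  fixes \<mu> :: "real \<Rightarrow> real" and \<alpha> \<beta> H m r1 :: real
  assumes smooth: "\<And>k. differentiable_upto k {\<alpha><..<\<beta>} \<mu>"
    and mono: "mono_on {\<alpha><..<\<beta>} \<mu>"
    and bounds: "\<And>r. \<alpha> < r \<Longrightarrow> r < \<beta> \<Longrightarrow> 2 * \<mu> r < r \<and> \<mu> r \<le> H"
    and H_less: "H < m"
    and r1: "\<alpha> < r1" "2 * H < r1" "r1 < \<beta>"
begin

definition r2 :: real where
  "r2 = (r1 + \<beta>) / 2"

definition R1 :: real where
  "R1 = max (2 * m) \<beta>"

definition R2 :: real where
  "R2 = R1 + 1"

definition outer_mass :: "real \<Rightarrow> real" where
  "outer_mass r = H + ramp R1 R2 r * (m - H)"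

text \<open>The value H beyond \<beta> only matters through monotonicity: it is multiplied by
  1 - ramp r1 r2 = 0 there.\<close>

definition inner_mass :: "real \<Rightarrow> real" where
  "inner_mass r = (if r < \<beta> then \<mu> r else H)"

definition glued_mass :: "real \<Rightarrow> real" where
  "glued_mass r = (1 - ramp r1 r2 r) * inner_mass r + ramp r1 r2 r * outer_mass r"

lemma r2_bounds: "r1 < r2" "r2 < \<beta>"
  using r1 by (simp_all add: r2_def)

lemma outer_mass_bounds: "H \<le> outer_mass r" "outer_mass r \<le> m"
proof -
  have "0 \<le> ramp R1 R2 r * (m - H)" "ramp R1 R2 r * (m - H) \<le> m - H"
    using ramp_bounds[of R1 R2 r] H_less by (simp_all add: mult_left_le_one_le)
  then show "H \<le> outer_mass r" "outer_mass r \<le> m"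
    by (simp_all add: outer_mass_def)
qed

lemma differentiable_upto_outer_mass: "differentiable_upto k U outer_mass"
proof -
  have "differentiable_upto k UNIV outer_mass"
    unfolding outer_mass_def
    by (intro differentiable_upto_add differentiable_upto_mult differentiable_upto_const
        differentiable_upto_ramp open_UNIV)
  then show ?thesis
    by (rule differentiable_upto_subset) simp
qed

lemma twice_outer_mass_less: "r1 < r \<Longrightarrow> 2 * outer_mass r < r"
  using r1 outer_mass_bounds(2)[of r]
  by (cases "r \<le> R1") (simp_all add: outer_mass_def ramp_eq_0 R1_def R2_def)

lemma differentiable_upto_glued_mass: "differentiable_upto k {\<alpha><..} glued_mass"
proof -
  have "differentiable_upto k {\<alpha><..<\<beta>} (\<lambda>r. (1 - ramp r1 r2 r) * \<mu> r + ramp r1 r2 r * outer_mass r)"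
    by (intro differentiable_upto_add differentiable_upto_mult differentiable_upto_diff
        differentiable_upto_const differentiable_upto_ramp smooth differentiable_upto_outer_mass
        open_greaterThanLessThan)
  then have "differentiable_upto k {\<alpha><..<\<beta>} glued_mass"
    by (rule differentiable_upto_cong[OF open_greaterThanLessThan, rotated])
      (simp add: glued_mass_def inner_mass_def)
  moreover have "differentiable_upto k {r2<..} glued_mass"
    using differentiable_upto_outer_mass
    by (rule differentiable_upto_cong[OF open_greaterThan, rotated])
      (simp add: glued_mass_def ramp_eq_1 r2_bounds)
  ultimately have "differentiable_upto k ({\<alpha><..<\<beta>} \<union> {r2<..}) glued_mass"
    by (rule differentiable_upto_Un)
  then show ?thesis
    by (rule differentiable_upto_subset) (use r2_bounds in auto)
qed

lemma mono_on_glued_mass: "mono_on {\<alpha><..} glued_mass"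
  unfolding glued_mass_def
proof (rule mono_on_blend)
  show "mono_on {\<alpha><..} inner_mass"
  proof (rule mono_onI)
    fix r s assume "r \<in> {\<alpha><..}" "s \<in> {\<alpha><..}" "r \<le> s"
    then show "inner_mass r \<le> inner_mass s"
      using bounds mono_onD[OF mono] by (auto simp: inner_mass_def)
  qed
  have "mono outer_mass"
    using monoD[OF mono_ramp[of R1 R2]] R2_def H_less
    by (intro monoI) (simp add: outer_mass_def mult_right_mono)
  then show "mono_on {\<alpha><..} outer_mass"
    by (simp add: mono_imp_mono_on)
  show "mono_on {\<alpha><..} (ramp r1 r2)"
    using mono_ramp[OF r2_bounds(1)] by (simp add: mono_imp_mono_on)
  show "\<And>r. r \<in> {\<alpha><..} \<Longrightarrow> 0 \<le> ramp r1 r2 r \<and> ramp r1 r2 r \<le> 1 \<and> inner_mass r \<le> outer_mass r"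
    using bounds ramp_bounds outer_mass_bounds(1) by (simp add: inner_mass_def) (meson order.trans)
qed

lemma glued_mass_eq: "r \<le> r1 \<Longrightarrow> glued_mass r = \<mu> r"
  using r1 r2_bounds by (simp add: glued_mass_def inner_mass_def ramp_eq_0)

lemma twice_glued_mass_less: "\<alpha> < r \<Longrightarrow> 2 * glued_mass r < r"
proof (cases "r \<le> r1")
  case True
  assume "\<alpha> < r"
  with True show ?thesis
    using bounds[of r] r1 by (simp add: glued_mass_eq)
next
  case False
  assume "\<alpha> < r"
  then have "2 * inner_mass r < r"
    using bounds[of r] False r1 by (auto simp: inner_mass_def)
  then have "(1 - ramp r1 r2 r) * (2 * inner_mass r) + ramp r1 r2 r * (2 * outer_mass r) < r"
    using ramp_bounds twice_outer_mass_less False by (intro convex_bound_lt) auto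
  then show ?thesis
    by (simp add: glued_mass_def algebra_simps)
qed

lemma glued_mass_exterior: "R2 \<le> r \<Longrightarrow> glued_mass r = m"
  using r2_bounds by (simp add: glued_mass_def outer_mass_def ramp_eq_1 R1_def R2_def)

lemma beta_less_R2: "\<beta> < R2"
  by (simp add: R1_def R2_def)

end

text \<open>A mass profile M on area radii r > \<alpha> determines the warped product ds^2 + F(s)^2 g_*
  with F' = slope F: the arc length s is radial_distance of the area radius, normalised to
  s0 at radius c, and F is its inverse.\<close>

locale mass_profile =
  fixes M :: "real \<Rightarrow> real" and \<alpha> m R c s0 :: real
  assumes \<alpha>_nonneg: "0 \<le> \<alpha>"
    and smooth: "\<And>k. differentiable_upto k {\<alpha><..} M"
    and mono: "mono_on {\<alpha><..} M"
    and subcritical: "\<And>r. \<alpha> < r \<Longrightarrow> 2 * M r < r"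
    and exterior: "\<And>r. R \<le> r \<Longrightarrow> M r = m"
    and m_nonneg: "0 \<le> m"
    and base: "\<alpha> < c" "c < R"
begin

definition slope :: "real \<Rightarrow> real" where
  "slope r = sqrt (1 - 2 * M r / r)"

definition radial_distance :: "real \<Rightarrow> real" where
  "radial_distance r = s0 + integral {c..r} (\<lambda>t. inverse (slope t))"

definition area_radius :: "real \<Rightarrow> real" where
  "area_radius = inv_into {c<..} radial_distance"

lemma slope_pos: "\<alpha> < r \<Longrightarrow> 0 < slope r"
  using subcritical[of r] \<alpha>_nonneg by (simp add: slope_def)

lemma slope_le_1: "R \<le> r \<Longrightarrow> slope r \<le> 1"
  using exterior[of r] m_nonneg base \<alpha>_nonneg by (simp add: slope_def)

lemma differentiable_upto_inverse_slope: "differentiable_upto k {\<alpha><..} (\<lambda>r. inverse (slope r))"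
proof -
  have "differentiable_upto k {\<alpha><..} (\<lambda>r. inverse r)"
    by (rule differentiable_upto_inverse_compose[OF open_greaterThan differentiable_upto_ident])
      (use \<alpha>_nonneg in auto)
  then have "differentiable_upto k {\<alpha><..} (\<lambda>r. sqrt (1 - 2 * M r * inverse r))"
    using subcritical \<alpha>_nonneg
    by (intro differentiable_upto_sqrt_compose differentiable_upto_diff differentiable_upto_const
        differentiable_upto_mult differentiable_upto_cmult smooth open_greaterThan)
      (auto simp: field_simps)
  then have "differentiable_upto k {\<alpha><..} slope"
    by (rule differentiable_upto_cong[OF open_greaterThan, rotated])
      (simp add: slope_def divide_inverse)
  then show ?thesis
    using slope_pos
    by (intro differentiable_upto_inverse_compose[OF open_greaterThan])
      (auto simp: less_imp_neq[symmetric])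
qed

lemma continuous_on_inverse_slope: "continuous_on {c..r} (\<lambda>t. inverse (slope t))"
proof (intro continuous_at_imp_continuous_on ballI)
  fix t assume "t \<in> {c..r}"
  then have "(\<lambda>t. inverse (slope t)) differentiable (at t)"
    using differentiable_upto_inverse_slope[of 1] base by auto
  then show "isCont (\<lambda>t. inverse (slope t)) t"
    by (rule differentiable_imp_continuous_within)
qed

lemma has_real_derivative_radial_distance:
  assumes "c < r"
  shows "(radial_distance has_real_derivative inverse (slope r)) (at r)"
proof -
  have "((\<lambda>r. integral {c..r} (\<lambda>t. inverse (slope t))) has_real_derivative inverse (slope r))
      (at r within {c..r + 1})"
    using integral_has_real_derivative[OF continuous_on_inverse_slope, of r] assms by simp
  moreover have "at r within {c..r + 1} = at r"
    by (rule at_within_interior) (use assms in \<open>simp add: interior_atLeastAtMost_real\<close>)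
  ultimately show ?thesis
    unfolding radial_distance_def by (auto intro: DERIV_add[OF DERIV_const, simplified])
qed

lemma continuous_on_radial_distance: "continuous_on {c..} radial_distance"
proof (clarsimp simp: continuous_on_eq_continuous_within)
  fix x assume "c \<le> x"
  have "continuous_on {c..x + 1} (\<lambda>r. integral {c..r} (\<lambda>t. inverse (slope t)))"
    by (rule DERIV_continuous_on[OF integral_has_real_derivative[OF continuous_on_inverse_slope]])
  then have "continuous (at x within {c..x + 1}) radial_distance"
    using \<open>c \<le> x\<close> unfolding radial_distance_def
    by (intro continuous_intros) (simp add: continuous_on_eq_continuous_within)
  moreover have "at x within {c..} = at x within {c..x + 1}"
    by (rule at_within_nhd[of _ "{..<x + 1}"]) auto
  ultimately show "continuous (at x within {c..}) radial_distance"
    by simp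
qed

lemma strict_mono_radial_distance: "strict_mono_on {c..} radial_distance"
proof (rule strict_mono_on_if_DERIV_pos[OF _ continuous_on_radial_distance])
  fix x assume "x \<in> interior {c..}"
  then have "c < x" by (simp add: interior_Ici[of "c - 1"])
  then show "\<exists>D. (radial_distance has_real_derivative D) (at x) \<and> D > 0"
    using has_real_derivative_radial_distance slope_pos base by fastforce
qed simp

lemma inj_on_radial_distance: "inj_on radial_distance {c<..}"
  by (rule strict_mono_on_imp_inj_on, rule monotone_on_subset[OF strict_mono_radial_distance]) auto

lemma radial_distance_base: "radial_distance c = s0"
  by (simp add: radial_distance_def)

lemma radial_distance_grows: "R \<le> r \<Longrightarrow> radial_distance R + (r - R) \<le> radial_distance r"
proof (cases "R = r")
  case False
  assume "R \<le> r"
  with False have "R < r" by simp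
  then obtain z where z: "R < z"
      "radial_distance r - radial_distance R = (r - R) * inverse (slope z)"
    using MVT2[OF \<open>R < r\<close>, of radial_distance "\<lambda>t. inverse (slope t)"]
      has_real_derivative_radial_distance base by fastforce
  have "1 \<le> inverse (slope z)"
    using slope_le_1[of z] slope_pos[of z] z(1) base by (simp add: one_le_inverse_iff)
  then have "r - R \<le> (r - R) * inverse (slope z)"
    using \<open>R < r\<close> by (simp add: mult_le_cancel_left1)
  with z(2) show ?thesis by simp
qed simp

lemma radial_distance_surj: "{s0<..} \<subseteq> radial_distance ` {c<..}"
proof
  fix y assume "y \<in> {s0<..}"
  define T where "T = R + max 0 (y - radial_distance R)"
  have "radial_distance c \<le> y" "y \<le> radial_distance T" "c \<le> T"
    using \<open>y \<in> {s0<..}\<close> radial_distance_base radial_distance_grows[of T] base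
    by (auto simp: T_def)
  then obtain x where "x \<in> {c..T}" "radial_distance x = y"
    using IVT'[of radial_distance c y T] continuous_on_subset[OF continuous_on_radial_distance]
    by auto
  moreover have "x \<noteq> c"
    using \<open>radial_distance x = y\<close> \<open>y \<in> {s0<..}\<close> radial_distance_base by auto
  ultimately show "y \<in> radial_distance ` {c<..}"
    by auto
qed

lemma area_radius_inverse:
  assumes "s0 < s"
  shows "c < area_radius s" "radial_distance (area_radius s) = s"
  using radial_distance_surj assms inv_into_into[of s radial_distance "{c<..}"]
    f_inv_into_f[of s radial_distance "{c<..}"]
  by (auto simp: area_radius_def)

lemma has_real_derivative_area_radius:
  assumes "s0 < s"
  shows "(area_radius has_real_derivative slope (area_radius s)) (at s)"
proof -
  have "(area_radius has_real_derivative inverse (inverse (slope (area_radius s)))) (at s)"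
    unfolding area_radius_def
  proof (rule has_real_derivative_inv_into[OF open_greaterThan inj_on_radial_distance
        continuous_on_subset[OF continuous_on_radial_distance] open_greaterThan
        radial_distance_surj])
    show "(radial_distance has_real_derivative inverse (slope (inv_into {c<..} radial_distance s)))
        (at (inv_into {c<..} radial_distance s))"
      using area_radius_inverse(1)[OF assms] by (intro has_real_derivative_radial_distance)
        (simp add: area_radius_def)
    show "inverse (slope (inv_into {c<..} radial_distance s)) \<noteq> 0"
      using area_radius_inverse(1)[OF assms] slope_pos[of "area_radius s"] base
        by (simp add: area_radius_def)
  qed (use assms in auto)
  then show ?thesis by simp
qed

lemma deriv_area_radius: "s0 < s \<Longrightarrow> deriv area_radius s = slope (area_radius s)"
  by (rule DERIV_imp_deriv[OF has_real_derivative_area_radius])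

lemma differentiable_upto_area_radius: "differentiable_upto k {s0<..} area_radius"
  unfolding area_radius_def
proof (rule differentiable_upto_inv_into[OF open_greaterThan inj_on_radial_distance
      open_greaterThan radial_distance_surj])
  fix x :: real assume "x \<in> {c<..}"
  then have "deriv radial_distance x = inverse (slope x)" "0 < slope x"
    using DERIV_imp_deriv[OF has_real_derivative_radial_distance] slope_pos base by auto
  then show "deriv radial_distance x \<noteq> 0" by simp
next
  fix k
  show "differentiable_upto k {c<..} radial_distance"
  proof (cases k)
    case (Suc j)
    have "differentiable_upto j {c<..} (\<lambda>r. inverse (slope r))"
      by (rule differentiable_upto_subset[OF differentiable_upto_inverse_slope]) (use base in auto)
    moreover have "(radial_distance has_real_derivative inverse (slope r)) (at r)"
      if "r \<in> {c<..}" for r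
      using that by (simp add: has_real_derivative_radial_distance)
    ultimately show ?thesis
      unfolding Suc by (intro differentiable_upto_derivI[OF open_greaterThan])
  qed simp
qed

lemma warped_hawking_mass_area_radius:
  assumes "s0 < s"
  shows "warped_hawking_mass area_radius s = M (area_radius s)"
proof -
  have r: "\<alpha> < area_radius s" "0 < area_radius s"
    using area_radius_inverse(1)[OF assms] base \<alpha>_nonneg by auto
  then have "(slope (area_radius s))\<^sup>2 = 1 - 2 * M (area_radius s) / area_radius s"
    using subcritical[of "area_radius s"] by (simp add: slope_def)
  then show ?thesis
    using r deriv_area_radius[OF assms] by (simp add: warped_hawking_mass_def field_simps)
qed

text \<open>Since the Hawking mass of the level sets is M(r), the derivative identity for the Hawking
  mass gives scal = 4 M'(r) / r^2.\<close>

lemma warped_scal_area_radius_nonneg: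
  assumes "s0 < s"
  shows "0 \<le> warped_scal area_radius s"
proof -
  let ?r = "area_radius s"
  have r: "\<alpha> < ?r" "0 < ?r"
    using area_radius_inverse(1)[OF assms] base \<alpha>_nonneg by auto
  obtain D where D: "(M has_real_derivative D) (at ?r)"
    using smooth[of 1] r by (auto simp: real_differentiable_def)
  have "0 \<le> D"
    by (rule has_real_derivative_nonneg_if_mono_on[OF mono open_greaterThan _ D]) (use r in simp)
  have "area_radius differentiable (at s)" "deriv area_radius differentiable (at s)"
    using differentiable_upto_area_radius[of 2] assms by (simp_all add: numeral_2_eq_2)
  from has_real_derivative_warped_hawking_mass[OF this] r
  have mass_deriv: "(warped_hawking_mass area_radius has_real_derivative
      slope ?r * ?r\<^sup>2 * warped_scal area_radius s / 4) (at s)"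
    by (simp add: deriv_area_radius[OF assms])
  have "((\<lambda>s. M (area_radius s)) has_real_derivative D * slope ?r) (at s)"
    by (rule DERIV_chain2[OF D has_real_derivative_area_radius[OF assms]])
  then have "(warped_hawking_mass area_radius has_real_derivative D * slope ?r) (at s)"
    by (rule has_field_derivative_transform_within_open[OF _ open_greaterThan])
      (use assms warped_hawking_mass_area_radius in auto)
  with mass_deriv have "slope ?r * ?r\<^sup>2 * warped_scal area_radius s / 4 = D * slope ?r"
    by (rule DERIV_unique)
  then have "warped_scal area_radius s = 4 * D / ?r\<^sup>2"
    using slope_pos[OF r(1)] r(2) by (simp add: field_simps)
  then show ?thesis
    using \<open>0 \<le> D\<close> by simp
qed

lemma schwarzschild_end_area_radius:
  "s0 < radial_distance R" "schwarzschild_end m area_radius (radial_distance R)"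
proof -
  show "s0 < radial_distance R"
    using strict_mono_onD[OF strict_mono_radial_distance, of c R] base radial_distance_base by simp
  show "schwarzschild_end m area_radius (radial_distance R)"
    unfolding schwarzschild_end_def
  proof (intro allI impI)
    fix s assume s: "radial_distance R \<le> s"
    with \<open>s0 < radial_distance R\<close> have "s0 < s" by simp
    have "R \<le> area_radius s"
    proof (rule ccontr)
      assume "\<not> R \<le> area_radius s"
      then have "radial_distance (area_radius s) < radial_distance R"
        using area_radius_inverse(1)[OF \<open>s0 < s\<close>] base
        by (intro strict_mono_onD[OF strict_mono_radial_distance]) auto
      then show False
        using area_radius_inverse(2)[OF \<open>s0 < s\<close>] s by simp
    qed
    then show "2 * m < area_radius s \<and> deriv area_radius s = sqrt (1 - 2 * m / area_radius s)"
      using subcritical[of "area_radius s"] exterior base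
        deriv_area_radius[OF \<open>s0 < s\<close>] by (simp add: slope_def)
  qed
qed

lemma area_radius_unique:
  assumes "s0 < t" "g s0 = c" "continuous_on {s0..t} g"
    and "\<And>u. s0 < u \<Longrightarrow> u < t \<Longrightarrow> (g has_real_derivative slope (g u)) (at u)"
    and "\<And>u. s0 < u \<Longrightarrow> u \<le> t \<Longrightarrow> c < g u"
  shows "area_radius t = g t"
proof -
  have "radial_distance (g t) - t = radial_distance (g s0) - s0"
  proof (rule DERIV_isconst_end[OF assms(1)])
    have "g ` {s0..t} \<subseteq> {c..}"
      using assms(2,5) by (force simp: order.order_iff_strict)
    then show "continuous_on {s0..t} (\<lambda>u. radial_distance (g u) - u)"
      by (intro continuous_intros continuous_on_compose2[OF continuous_on_radial_distance assms(3)])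
  next
    fix u assume u: "s0 < u" "u < t"
    have "((\<lambda>u. radial_distance (g u)) has_real_derivative
        inverse (slope (g u)) * slope (g u)) (at u)"
      using u assms(5) by (intro DERIV_chain2[OF has_real_derivative_radial_distance assms(4)]) auto
    moreover have "inverse (slope (g u)) * slope (g u) = 1"
      using slope_pos[of "g u"] assms(5)[of u] u base by simp
    ultimately show "((\<lambda>u. radial_distance (g u) - u) has_real_derivative 0) (at u)"
      using DERIV_diff[OF _ DERIV_ident] by fastforce
  qed
  then have "radial_distance (g t) = t"
    using assms(2) radial_distance_base by simp
  then show ?thesis
    using inv_into_f_f[OF inj_on_radial_distance, of "g t"] assms(1,5)
    by (simp add: area_radius_def)
qed

end

section \<open>Extending a positively curved collar\<close>

locale psc_collar =
  fixes f :: "real \<Rightarrow> real" and a b p :: real and U :: "real set"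
  assumes open_U: "open U" and ab_U: "{a..b} \<subseteq> U"
    and smooth: "\<And>k. differentiable_upto k U f"
    and pos: "\<And>s. s \<in> {a..b} \<Longrightarrow> 0 < f s"
    and psc: "\<And>s. s \<in> {a..b} \<Longrightarrow> 0 < warped_scal f s"
    and p: "a < p" "p < b"
    and increasing: "\<And>s. s \<in> {p..b} \<Longrightarrow> 0 < deriv f s"
begin

lemma pb_subset: "{p..b} \<subseteq> {a..b}" "{p..b} \<subseteq> U"
  using p ab_U by auto

lemma differentiable_upto_deriv: "differentiable_upto k U (deriv f)"
  using smooth[of "Suc k"] by simp

lemma differentiable_f: "s \<in> U \<Longrightarrow> f differentiable (at s)" "s \<in> U \<Longrightarrow> deriv f differentiable (at s)"
  using smooth[of 1] differentiable_upto_deriv[of 1] by auto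

lemma continuous_on_f: "continuous_on U f"
  using differentiable_f(1)
    by (meson continuous_at_imp_continuous_on differentiable_imp_continuous_within)

lemma strict_mono_f: "strict_mono_on {p..b} f"
proof (rule strict_mono_on_if_DERIV_pos[OF _ continuous_on_subset[OF continuous_on_f pb_subset(2)]])
  fix x assume "x \<in> interior {p..b}"
  then have "x \<in> {p..b}" using interior_subset by blast
  then have "(f has_real_derivative deriv f x) (at x)" "0 < deriv f x"
    using increasing differentiable_f(1) pb_subset
    by (auto simp: DERIV_deriv_iff_real_differentiable)
  then show "\<exists>D. (f has_real_derivative D) (at x) \<and> D > 0"
    by blast
qed simp

lemma strict_mono_hawking_mass: "strict_mono_on {p..b} (warped_hawking_mass f)"
proof -
  have D: "(warped_hawking_mass f has_real_derivative
      deriv f s * (f s)\<^sup>2 * warped_scal f s / 4) (at s)" if "s \<in> {p..b}" for s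
  proof (rule has_real_derivative_warped_hawking_mass)
    have "s \<in> U" "s \<in> {a..b}" using that pb_subset by auto
    then show "f differentiable (at s)" "deriv f differentiable (at s)" "f s \<noteq> 0"
      using differentiable_f pos[of s] by auto
  qed
  then have "continuous_on {p..b} (warped_hawking_mass f)"
    by (meson DERIV_isCont continuous_at_imp_continuous_on)
  then show ?thesis
  proof (rule strict_mono_on_if_DERIV_pos[rotated])
    fix x assume "x \<in> interior {p..b}"
    then have "x \<in> {p..b}" using interior_subset by blast
    moreover have "0 < deriv f x * (f x)\<^sup>2 * warped_scal f x / 4"
      using increasing[of x] pos[of x] psc[of x] pb_subset \<open>x \<in> {p..b}\<close> by auto
    ultimately show "\<exists>D. (warped_hawking_mass f has_real_derivative D) (at x) \<and> D > 0"
      using D by blast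
  qed simp
qed

definition collar_mass :: "real \<Rightarrow> real" where
  "collar_mass r = warped_hawking_mass f (inv_into {p<..<b} f r)"

lemma inj_on_f: "inj_on f {p<..<b}"
  by (rule strict_mono_on_imp_inj_on, rule monotone_on_subset[OF strict_mono_f]) auto

lemma collar_range: "{f p<..<f b} \<subseteq> f ` {p<..<b}"
proof
  fix r assume r: "r \<in> {f p<..<f b}"
  then obtain x where "x \<in> {p..b}" "f x = r"
    using IVT'[of f p r b] continuous_on_subset[OF continuous_on_f pb_subset(2)] p by auto
  moreover have "x \<noteq> p" "x \<noteq> b"
    using r \<open>f x = r\<close> by auto
  ultimately show "r \<in> f ` {p<..<b}"
    by auto
qed

lemma collar_inverse:
  assumes "r \<in> {f p<..<f b}"
  shows "inv_into {p<..<b} f r \<in> {p<..<b}" "f (inv_into {p<..<b} f r) = r"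
proof -
  have "r \<in> f ` {p<..<b}" using assms collar_range by blast
  then show "inv_into {p<..<b} f r \<in> {p<..<b}" "f (inv_into {p<..<b} f r) = r"
    by (rule inv_into_into, rule f_inv_into_f)
qed

lemma collar_mass_f: "s \<in> {p<..<b} \<Longrightarrow> collar_mass (f s) = warped_hawking_mass f s"
  by (simp add: collar_mass_def inv_into_f_f[OF inj_on_f])

lemma differentiable_upto_collar_mass: "differentiable_upto k {f p<..<f b} collar_mass"
proof -
  have "differentiable_upto k U (\<lambda>s. 1/2 * (f s * (1 - deriv f s * deriv f s)))"
    by (intro differentiable_upto_cmult differentiable_upto_mult differentiable_upto_diff
        differentiable_upto_const smooth differentiable_upto_deriv open_U)
  then have hawking: "differentiable_upto k U (warped_hawking_mass f)"
    by (rule differentiable_upto_cong[OF open_U, rotated])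
      (simp add: warped_hawking_mass_def power2_eq_square)
  have "differentiable_upto k {f p<..<f b} (inv_into {p<..<b} f)"
  proof (rule differentiable_upto_inv_into[OF open_greaterThanLessThan inj_on_f
        open_greaterThanLessThan collar_range])
    fix x assume "x \<in> {p<..<b}"
    then show "deriv f x \<noteq> 0"
      using increasing[of x] by simp
  next
    fix k
    show "differentiable_upto k {p<..<b} f"
      using pb_subset by (intro differentiable_upto_subset[OF smooth]) auto
  qed
  moreover have "inv_into {p<..<b} f r \<in> U" if "r \<in> {f p<..<f b}" for r
    using collar_inverse(1)[OF that] pb_subset by auto
  ultimately show ?thesis
    unfolding collar_mass_def
    by (rule differentiable_upto_compose[OF open_greaterThanLessThan open_U _ hawking, rotated])
qed

lemma mono_collar_mass: "mono_on {f p<..<f b} collar_mass"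
proof (rule mono_onI)
  fix r r' assume r: "r \<in> {f p<..<f b}" "r' \<in> {f p<..<f b}" "r \<le> r'"
  define x y where "x = inv_into {p<..<b} f r" and "y = inv_into {p<..<b} f r'"
  have "x \<in> {p<..<b}" "y \<in> {p<..<b}" "f x \<le> f y"
    using collar_inverse[OF r(1)] collar_inverse[OF r(2)] r(3) by (simp_all add: x_def y_def)
  then have "x \<in> {p..b}" "y \<in> {p..b}" "f x \<le> f y"
    by auto
  then have "x \<le> y"
    using strict_mono_on_less_eq[OF strict_mono_f] by blast
  then show "collar_mass r \<le> collar_mass r'"
    using strict_mono_on_less_eq[OF strict_mono_hawking_mass] \<open>x \<in> {p..b}\<close> \<open>y \<in> {p..b}\<close>
    by (simp add: collar_mass_def x_def y_def)
qed

lemma twice_hawking_mass_less: "s \<in> {p..b} \<Longrightarrow> 2 * warped_hawking_mass f s < f s"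
  using pos[of s] increasing[of s] pb_subset by (auto simp: warped_hawking_mass_def)

lemma collar_mass_bounds:
  assumes "r \<in> {f p<..<f b}"
  shows "2 * collar_mass r < r" "collar_mass r \<le> warped_hawking_mass f b"
proof -
  let ?x = "inv_into {p<..<b} f r"
  have x: "?x \<in> {p..b}" "f ?x = r"
    using collar_inverse[OF assms] by auto
  show "2 * collar_mass r < r"
    using twice_hawking_mass_less[OF x(1)] x(2) by (simp add: collar_mass_def)
  show "collar_mass r \<le> warped_hawking_mass f b"
    using strict_mono_on_less_eq[OF strict_mono_hawking_mass x(1), of b] x(1) p
    by (simp add: collar_mass_def)
qed

lemma collar_mass_slope:
  assumes "u \<in> {p<..<b}"
  shows "sqrt (1 - 2 * collar_mass (f u) / f u) = deriv f u"
proof -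
  have "0 < f u" "0 < deriv f u"
    using assms pos increasing p by auto
  then have "1 - 2 * collar_mass (f u) / f u = (deriv f u)\<^sup>2"
    using collar_mass_f[OF assms] by (simp add: warped_hawking_mass_def field_simps)
  then show ?thesis
    using \<open>0 < deriv f u\<close> by simp
qed

text \<open>The mass profile is modified only above the area radius r1 > f q1, so the resulting
  area-radius solution started at the sphere of radius f q coincides with f on [q, q1].\<close>

lemma area_radius_extension:
  assumes hawking: "0 \<le> warped_hawking_mass f b" "warped_hawking_mass f b < m"
  obtains q q1 s1 \<Phi> where "p < q" "q < b" "q < q1" "q < s1"
    "\<And>k. differentiable_upto k {q<..} \<Phi>" "\<And>s. q < s \<Longrightarrow> s \<le> q1 \<Longrightarrow> f s = \<Phi> s"
    "\<And>s. q < s \<Longrightarrow> 0 < \<Phi> s \<and> 0 < deriv \<Phi> s \<and> 0 \<le> warped_scal \<Phi> s"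
    "schwarzschild_end m \<Phi> s1"
proof -
  let ?H = "warped_hawking_mass f b"
  define q where "q = (p + b) / 2"
  define q1 where "q1 = (q + b) / 2"
  define r1 where "r1 = (max (f q1) (2 * ?H) + f b) / 2"
  have q: "p < q" "q < q1" "q1 < b"
    using p by (simp_all add: q_def q1_def)
  have f_q: "f p < f q" "f q < f q1" "f q1 < f b"
    using strict_mono_onD[OF strict_mono_f] q p by auto
  have "2 * ?H < f b"
    using twice_hawking_mass_less[of b] p by simp
  then have r1_bounds: "f p < r1" "2 * ?H < r1" "r1 < f b" "f q1 < r1"
    using f_q by (auto simp: r1_def max_def)
  interpret mass_gluing collar_mass "f p" "f b" ?H m r1
    using differentiable_upto_collar_mass mono_collar_mass collar_mass_bounds hawking(2) r1_bounds
    by unfold_locales auto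
  interpret mass_profile glued_mass "f p" m R2 "f q" q
    using differentiable_upto_glued_mass mono_on_glued_mass twice_glued_mass_less
      glued_mass_exterior beta_less_R2 pos[of p] p f_q hawking
    by unfold_locales auto
  have "area_radius t = f t" if "q < t" "t \<le> q1" for t
  proof (rule area_radius_unique[where g = f, OF that(1) refl])
    show "continuous_on {q..t} f"
      by (rule continuous_on_subset[OF continuous_on_f]) (use ab_U p that q in auto)
  next
    fix u assume "q < u" "u \<le> t"
    then show "f q < f u"
      using strict_mono_onD[OF strict_mono_f] that q by auto
  next
    fix u assume u: "q < u" "u < t"
    then have u_pb: "u \<in> {p<..<b}"
      using that q by auto
    have "f p < f u" "f u \<le> f q1"
      using strict_mono_on_less_eq[OF strict_mono_f] strict_mono_onD[OF strict_mono_f] u_pb u that q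
      by auto
    then have "slope (f u) = deriv f u"
      using collar_mass_slope[OF u_pb] glued_mass_eq[of "f u"] r1_bounds by (simp add: slope_def)
    moreover have "u \<in> U"
      using pb_subset(2) u_pb by auto
    ultimately show "(f has_real_derivative slope (f u)) (at u)"
      using differentiable_f(1) by (simp add: DERIV_deriv_iff_real_differentiable)
  qed
  moreover have "0 < area_radius s \<and> 0 < deriv area_radius s \<and> 0 \<le> warped_scal area_radius s"
    if "q < s" for s
    using area_radius_inverse(1)[OF that] slope_pos[of "area_radius s"] deriv_area_radius[OF that]
      warped_scal_area_radius_nonneg[OF that] f_q pos[of p] p by auto
  ultimately show thesis
    using that[OF q(1) _ q(2) schwarzschild_end_area_radius(1) differentiable_upto_area_radius] q
      schwarzschild_end_area_radius(2) by auto
qed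

lemma exists_schwarzschild_extension:
  assumes "0 \<le> warped_hawking_mass f b" "warped_hawking_mass f b < m"
  shows "\<exists>F. smooth_on {a..} F \<and> (\<forall>s\<ge>a. F s > 0) \<and> (\<forall>s\<ge>a. warped_scal F s \<ge> 0)
    \<and> (\<exists>s1\<ge>a. schwarzschild_end m F s1) \<and> (\<forall>s\<in>{a..p}. F s = f s)
    \<and> ((\<forall>s\<in>{a..b}. deriv f s > 0) \<longrightarrow> (\<forall>s\<ge>a. warped_mean_curv F s > 0))"
proof -
  obtain q q1 s1 \<Phi> where \<Phi>: "p < q" "q < b" "q < q1" "q < s1"
    "\<And>k. differentiable_upto k {q<..} \<Phi>" "\<And>s. q < s \<Longrightarrow> s \<le> q1 \<Longrightarrow> f s = \<Phi> s"
    "\<And>s. q < s \<Longrightarrow> 0 < \<Phi> s \<and> 0 < deriv \<Phi> s \<and> 0 \<le> warped_scal \<Phi> s"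
    "schwarzschild_end m \<Phi> s1"
    using area_radius_extension[OF assms] by blast
  let ?F = "\<lambda>s. if s \<le> q1 then f s else \<Phi> s"
  have "{a..q} \<subseteq> U"
    using \<Phi>(2) ab_U by auto
  have collar: "?F s = f s \<and> warped_scal ?F s = warped_scal f s
      \<and> warped_mean_curv ?F s = warped_mean_curv f s" if "a \<le> s" "s \<le> q" for s
    by (rule warped_quantities_glued(1)[OF open_U \<open>{a..q} \<subseteq> U\<close> \<Phi>(3)]) (use \<Phi>(6) that in simp_all)
  have exterior: "?F s = \<Phi> s \<and> deriv ?F s = deriv \<Phi> s \<and> warped_scal ?F s = warped_scal \<Phi> s
      \<and> warped_mean_curv ?F s = warped_mean_curv \<Phi> s" if "q < s" for s
    by (rule warped_quantities_glued(2)[OF open_U \<open>{a..q} \<subseteq> U\<close> \<Phi>(3)]) (use \<Phi>(6) that in simp_all)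
  have "smooth_on {a..} ?F"
    by (rule smooth_on_glue[OF open_U \<open>{a..q} \<subseteq> U\<close> \<Phi>(3) smooth \<Phi>(5,6)])
  moreover have "?F s > 0 \<and> warped_scal ?F s \<ge> 0" if "a \<le> s" for s
    using collar[OF that] exterior \<Phi>(2,7) pos psc that by (cases "s \<le> q") (auto simp: less_imp_le)
  moreover have "a \<le> s1" "schwarzschild_end m ?F s1"
    using \<Phi>(1,4,8) p exterior by (simp_all add: schwarzschild_end_def)
  moreover have "?F s = f s" if "s \<in> {a..p}" for s
    using that \<Phi>(1,3) by simp
  moreover have "warped_mean_curv ?F s > 0" if "\<forall>s\<in>{a..b}. deriv f s > 0" "a \<le> s" for s
  proof (cases "s \<le> q")
    case True
    then have "0 < warped_mean_curv f s"
      using \<Phi>(2) pos that by (simp add: warped_mean_curv_def)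
    then show ?thesis
      using collar[OF that(2) True] by simp
  next
    case False
    then show ?thesis using exterior \<Phi>(7) by (simp add: warped_mean_curv_def)
  qed
  ultimately show ?thesis
    by (intro exI[of _ ?F] conjI) auto
qed

end

theorem proposition2p2:
  fixes f :: "real \<Rightarrow> real" and a b m_e :: real
  assumes ab: "a < b"
    and f_smooth: "smooth_on {a..b} f"
    and f_pos: "\<forall>s\<in>{a..b}. f s > 0"
    and psc: "\<forall>s\<in>{a..b}. warped_scal f s > 0"
    and mean_pos: "warped_mean_curv f b > 0"
    and hawking_nonneg: "warped_hawking_mass f b \<ge> 0"
    and me: "m_e > warped_hawking_mass f b"
  shows "\<exists>F :: real \<Rightarrow> real.
           smooth_on {a..} F
         \<and> (\<forall>s\<ge>a. F s > 0)
         \<and> (\<forall>s\<ge>a. warped_scal F s \<ge> 0)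
         \<and> (\<exists>s1\<ge>a. schwarzschild_end m_e F s1)
         \<and> (\<forall>s\<in>{a..<(a+b)/2}. F s = f s)
         \<and> ((\<forall>s\<in>{a..b}. deriv f s > 0) \<longrightarrow> (\<forall>s\<ge>a. warped_mean_curv F s > 0))"
proof -
  obtain U where U: "open U" "{a..b} \<subseteq> U" "\<forall>k. \<forall>x\<in>U. (deriv ^^ k) f differentiable (at x)"
    using f_smooth unfolding smooth_on_def by blast
  then have smooth: "\<And>k. differentiable_upto k U f"
    using differentiable_upto_all_iff by blast
  have "0 < f b"
    using f_pos ab by simp
  then have deriv_pos: "0 < deriv f b"
    using mean_pos by (simp add: warped_mean_curv_def zero_less_divide_iff)
  have "b \<in> U"
    using U(2) ab by auto
  then have "deriv f differentiable (at b)"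
    using smooth[of 2] by (simp add: numeral_2_eq_2)
  then have cont: "isCont (deriv f) b"
    by (rule differentiable_imp_continuous_within)
  have "(a + b) / 2 < b"
    using ab by simp
  then obtain p where p_bounds: "(a + b) / 2 < p" "p < b" "\<And>s. s \<in> {p..b} \<Longrightarrow> 0 < deriv f s"
    using exists_left_interval_pos[OF cont deriv_pos] by blast
  interpret psc_collar f a b p U
    using U(1,2) smooth f_pos psc p_bounds ab by unfold_locales auto
  have "{a..<(a + b) / 2} \<subseteq> {a..p}"
    using p_bounds(1) by auto
  with exists_schwarzschild_extension[OF hawking_nonneg me] show ?thesis
    by blast
qed

end
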